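(* The equation $Pu=0$ has a nonconstant radial solution $u=u(r)$ (on some interval $0<r<R$) if and only if \[ \beta(t)=\frac{\lambda}{a}p(t)-ik_1 \] for some $k_1\in\mathbb{Z}$ and some real-valued $2\pi$-periodic $p$ with $\int_0^{2\pi}p(t)dt=0$. In this case the radial solutions are exactly $u(r)=C_1\log r+C_2$ if $k_1=0$ and $u(r)=C_1r^{2ak_1}+C_2$ if $k_1\neq0$ ($C_1,C_2$ arbitrary real constants); with $B(t)=e^{ik_1t}\exp\big(\frac{\bar\lambda}{a}\int_0^tp(s)ds\big)$, the corresponding $L$-potentials are $w=iC_1B(t)$ when $k_1=0$ and $w=2iak_1C_1r^{2ak_1}B(t)$ when $k_1\ne0$, and (for $C_1\neq 0$) $w$ is a basic solution of $\mathcal{L}$ with character $(2ak_1,k_1)$.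
   Context: Fix $a>0$, $b\in\mathbb{R}$, $\lambda=a+ib$, and on $(0,\infty)\times\mathbb{S}^1$ (coordinates $(r,t)$) let $L=\lambda\partial_t-ir\partial_r$, $\bar L=\bar\lambda\partial_t+ir\partial_r$. Let $\beta\in C^m(\mathbb{S}^1,\mathbb{C})$, $m\ge2$, with $\frac{1}{2\pi i}\int_0^{2\pi}\beta(t)dt\in\mathbb{Z}$. Define $P=L\bar L+\bar\lambda\beta(t)L+\lambda\overline{\beta(t)}\bar L$, $B(t)=\exp\int_0^t\overline{\beta(s)}ds$, $c(t)=-\bar\lambda\beta(t)B(t)/\overline{B(t)}$, $\mathcal{L}w=Lw-c(t)\bar w$. The $L$-potential of a real function $u$ is $w=B\bar Lu$. A basic solution of $\mathcal{L}$ is a nontrivial solution of $\mathcal{L}w=0$ on $(0,\infty)\times\mathbb{S}^1$ of the form $r^\sigma\phi(t)+\overline{r^\sigma\psi(t)}$ ($\phi,\psi$ $2\pi$-periodic), written with $|\phi|>|\psi|$ if $\sigma\notin\mathbb{R}$ and as $r^\sigma f$ ($f$ nowhere zero) if $\sigma\in\mathbb{R}$; its character is $(\sigma,\text{winding number of }\phi\text{ (resp. }f))$. *)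

theory Defs
  imports "HOL-Analysis.Analysis"
begin

text \<open>Functions on (0,inf) x S^1 are represented as functions of (r,t) on real x real,
  2pi-periodic in t where required.\<close>

definition dR :: "(real \<Rightarrow> real \<Rightarrow> complex) \<Rightarrow> real \<Rightarrow> real \<Rightarrow> complex" where
  "dR w r t = vector_derivative (\<lambda>s. w s t) (at r)"

definition dT :: "(real \<Rightarrow> real \<Rightarrow> complex) \<Rightarrow> real \<Rightarrow> real \<Rightarrow> complex" where
  "dT w r t = vector_derivative (\<lambda>s. w r s) (at t)"

definition Lop :: "complex \<Rightarrow> (real \<Rightarrow> real \<Rightarrow> complex) \<Rightarrow> real \<Rightarrow> real \<Rightarrow> complex" where
  "Lop lam w r t = lam * dT w r t - \<i> * of_real r * dR w r t"

definition Lbarop :: "complex \<Rightarrow> (real \<Rightarrow> real \<Rightarrow> complex) \<Rightarrow> real \<Rightarrow> real \<Rightarrow> complex" where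
  "Lbarop lam w r t = cnj lam * dT w r t + \<i> * of_real r * dR w r t"

definition Pop :: "complex \<Rightarrow> (real \<Rightarrow> complex) \<Rightarrow> (real \<Rightarrow> real \<Rightarrow> complex) \<Rightarrow> real \<Rightarrow> real \<Rightarrow> complex" where
  "Pop lam \<beta> w r t = Lop lam (Lbarop lam w) r t + cnj lam * \<beta> t * Lop lam w r t
                     + lam * cnj (\<beta> t) * Lbarop lam w r t"

definition oint :: "real \<Rightarrow> real \<Rightarrow> (real \<Rightarrow> 'a::real_normed_vector) \<Rightarrow> 'a" where
  "oint x y f = (if x \<le> y then integral {x..y} f else - integral {y..x} f)"

fun nth_vderiv :: "nat \<Rightarrow> (real \<Rightarrow> 'a::real_normed_vector) \<Rightarrow> real \<Rightarrow> 'a" where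
  "nth_vderiv 0 f = f"
| "nth_vderiv (Suc k) f = (\<lambda>x. vector_derivative (nth_vderiv k f) (at x))"

definition Cm :: "nat \<Rightarrow> (real \<Rightarrow> 'a::real_normed_vector) \<Rightarrow> bool" where
  "Cm m f \<longleftrightarrow> (\<forall>k<m. \<forall>x. nth_vderiv k f differentiable (at x))
               \<and> continuous_on UNIV (nth_vderiv m f)"

definition Bexp :: "(real \<Rightarrow> complex) \<Rightarrow> real \<Rightarrow> complex" where
  "Bexp \<beta> t = exp (oint 0 t (\<lambda>s. cnj (\<beta> s)))"

definition cfun :: "complex \<Rightarrow> (real \<Rightarrow> complex) \<Rightarrow> real \<Rightarrow> complex" where
  "cfun lam \<beta> t = - cnj lam * \<beta> t * Bexp \<beta> t / cnj (Bexp \<beta> t)"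

definition Lcal :: "complex \<Rightarrow> (real \<Rightarrow> complex) \<Rightarrow> (real \<Rightarrow> real \<Rightarrow> complex) \<Rightarrow> real \<Rightarrow> real \<Rightarrow> complex" where
  "Lcal lam \<beta> w r t = Lop lam w r t - cfun lam \<beta> t * cnj (w r t)"

definition Lpot :: "complex \<Rightarrow> (real \<Rightarrow> complex) \<Rightarrow> (real \<Rightarrow> real \<Rightarrow> real) \<Rightarrow> real \<Rightarrow> real \<Rightarrow> complex" where
  "Lpot lam \<beta> u r t = Bexp \<beta> t * Lbarop lam (\<lambda>r t. complex_of_real (u r t)) r t"

definition radial_sol :: "complex \<Rightarrow> (real \<Rightarrow> complex) \<Rightarrow> real \<Rightarrow> (real \<Rightarrow> real) \<Rightarrow> bool" where
  "radial_sol lam \<beta> R u \<longleftrightarrow> 0 < R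
     \<and> (\<forall>r\<in>{0<..<R}. u differentiable (at r) \<and> deriv u differentiable (at r))
     \<and> (\<forall>r\<in>{0<..<R}. \<forall>t. Pop lam \<beta> (\<lambda>r t. complex_of_real (u r)) r t = 0)"

definition has_winding :: "(real \<Rightarrow> complex) \<Rightarrow> int \<Rightarrow> bool" where
  "has_winding f n \<longleftrightarrow> continuous_on UNIV f \<and> (\<forall>t. f t \<noteq> 0) \<and>
     (\<exists>\<theta>. continuous_on UNIV \<theta> \<and> (\<forall>t. f t = of_real (cmod (f t)) * exp (\<i> * of_real (\<theta> t)))
          \<and> \<theta> (2*pi) - \<theta> 0 = 2 * pi * of_int n)"

definition Lcal_solution :: "complex \<Rightarrow> (real \<Rightarrow> complex) \<Rightarrow> (real \<Rightarrow> real \<Rightarrow> complex) \<Rightarrow> bool" where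
  "Lcal_solution lam \<beta> w \<longleftrightarrow>
     (\<forall>r>0. \<forall>t. w r (t + 2*pi) = w r t)
     \<and> (\<forall>r>0. \<forall>t. (\<lambda>s. w s t) differentiable (at r) \<and> (\<lambda>s. w r s) differentiable (at t)
                 \<and> Lcal lam \<beta> w r t = 0)"

definition basic_solution :: "complex \<Rightarrow> (real \<Rightarrow> complex) \<Rightarrow> (real \<Rightarrow> real \<Rightarrow> complex) \<Rightarrow> complex \<Rightarrow> int \<Rightarrow> bool" where
  "basic_solution lam \<beta> w \<sigma> n \<longleftrightarrow>
     Lcal_solution lam \<beta> w \<and> (\<exists>r>0. \<exists>t. w r t \<noteq> 0) \<and>
     (if \<sigma> \<in> \<real> then
        (\<exists>f. (\<forall>t. f (t + 2*pi) = f t) \<and> (\<forall>t. f t \<noteq> 0)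
             \<and> (\<forall>r>0. \<forall>t. w r t = of_real r powr \<sigma> * f t) \<and> has_winding f n)
      else
        (\<exists>\<phi> \<psi>. (\<forall>t. \<phi> (t + 2*pi) = \<phi> t) \<and> (\<forall>t. \<psi> (t + 2*pi) = \<psi> t)
             \<and> (\<forall>t. cmod (\<psi> t) < cmod (\<phi> t))
             \<and> (\<forall>r>0. \<forall>t. w r t = of_real r powr \<sigma> * \<phi> t + cnj (of_real r powr \<sigma> * \<psi> t))
             \<and> has_winding \<phi> n))"

end

theory Submission
  imports Defs
begin

(*
  For a radial function u = u(r) the operator P reduces to an ordinary
  differential expression,  P u = r (u' + r u'') - 2 r u' q(t)  with
  q(t) = Im (lam * cnj (beta t)).  A nonconstant radial solution therefore forces
  2 q to be a constant sigma, and then u solves the Euler equation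
  (1 - sigma) u' + r u'' = 0, whose solutions on (0,R) are C1 ln r + C2 (sigma = 0)
  and C1 r powr sigma + C2 (sigma ~= 0).  A constant q means exactly that
  beta = lam/a p - i sigma/(2a) with p = Re beta; the integrality of the mean of beta
  then gives Int p = 0 and sigma = 2 a k1 with k1 an integer.  Conversely this form of
  beta gives 2 q = 2 a k1 and the explicit formula for B(t).
*)

section \<open>Calculus of the oriented integral\<close>

lemma oint_has_vector_derivative:
  fixes f :: "real \<Rightarrow> 'a::banach"
  assumes cf: "continuous_on UNIV f"
  shows "((\<lambda>t. oint 0 t f) has_vector_derivative f x) (at x)"
proof -
  define M where "M = \<bar>x\<bar> + 1"
  have int: "f integrable_on {c..d}" for c d
    by (rule integrable_continuous_real) (rule continuous_on_subset[OF cf], auto)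
  have eq: "oint 0 s f = integral {-M..s} f - integral {-M..0} f" if "s \<in> {-M<..<M}" for s
  proof (cases "0 \<le> s")
    case True
    then show ?thesis
      using Henstock_Kurzweil_Integration.integral_combine[where a="-M" and c=0 and b=s and f=f, OF _ _ int] that M_def
      unfolding oint_def by (auto simp: algebra_simps)
  next
    case False
    then show ?thesis
      using Henstock_Kurzweil_Integration.integral_combine[where a="-M" and c=s and b=0 and f=f, OF _ _ int] that M_def
      unfolding oint_def by (auto simp: algebra_simps)
  qed
  have "((\<lambda>u. integral {-M..u} f) has_vector_derivative f x) (at x within {-M..M})"
    by (rule integral_has_vector_derivative) (auto intro: continuous_on_subset[OF cf] simp: M_def)
  then have "((\<lambda>u. integral {-M..u} f) has_vector_derivative f x) (at x within {-M<..<M})"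
    by (rule has_vector_derivative_within_subset) auto
  then have "((\<lambda>u. integral {-M..u} f) has_vector_derivative f x) (at x)"
    by (subst (asm) at_within_open) (auto simp: M_def)
  then have "((\<lambda>u. integral {-M..u} f - integral {-M..0} f) has_vector_derivative f x) (at x)"
    by (rule derivative_eq_intros) auto
  then show ?thesis
    by (rule has_vector_derivative_transform_within_open[where S="{-M<..<M}"])
       (auto simp: M_def eq)
qed

lemma oint_has_real_derivative:
  fixes p :: "real \<Rightarrow> real"
  assumes "continuous_on UNIV p"
  shows "((\<lambda>t. oint 0 t p) has_real_derivative p x) (at x)"
  using oint_has_vector_derivative[OF assms] has_real_derivative_iff_has_vector_derivative by blast

lemma oint_same [simp]: "oint x x f = 0"
  by (simp add: oint_def)

lemma zero_derivative_imp_equal: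
  fixes f :: "real \<Rightarrow> 'a::real_normed_vector"
  assumes "convex S" "\<And>x. x \<in> S \<Longrightarrow> (f has_vector_derivative 0) (at x)" "x \<in> S" "y \<in> S"
  shows "f x = f y"
proof -
  obtain c where "\<And>x. x \<in> S \<Longrightarrow> f x = c"
    using has_vector_derivative_zero_constant[of S f] assms has_vector_derivative_at_within by blast
  then show ?thesis using assms by auto
qed

lemma oint_eq_antiderivative:
  fixes f F :: "real \<Rightarrow> 'a::banach"
  assumes cf: "continuous_on UNIV f" and dF: "\<And>x. (F has_vector_derivative f x) (at x)"
  shows "oint 0 t f = F t - F 0"
proof -
  have "(\<lambda>t. oint 0 t f - F t) t = (\<lambda>t. oint 0 t f - F t) 0"
    by (rule zero_derivative_imp_equal[where S=UNIV])
       (use oint_has_vector_derivative[OF cf] dF in \<open>auto intro!: derivative_eq_intros\<close>)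
  then show ?thesis by (simp add: algebra_simps)
qed

lemma oint_periodic:
  fixes p :: "real \<Rightarrow> real"
  assumes cp: "continuous_on UNIV p" and per: "\<forall>t. p (t + 2*pi) = p t"
    and mean0: "integral {0..2*pi} p = 0"
  shows "oint 0 (t + 2*pi) p = oint 0 t p"
proof -
  define D where "D t = oint 0 (t + 2*pi) p - oint 0 t p" for t
  have "(D has_real_derivative p (t + 2*pi) * 1 - p t) (at t)" for t
    unfolding D_def[abs_def]
    by (intro DERIV_diff DERIV_chain2[OF oint_has_real_derivative[OF cp]]
        oint_has_real_derivative[OF cp] derivative_eq_intros) auto
  then have "(D has_vector_derivative 0) (at t)" for t
    using per has_real_derivative_iff_has_vector_derivative by force
  then have "D t = D 0" by (intro zero_derivative_imp_equal[where S=UNIV]) auto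
  also have "D 0 = 0" using mean0 by (simp add: D_def oint_def)
  finally show ?thesis by (simp add: D_def)
qed

text \<open>The regularity hypothesis on beta is only used through continuity.\<close>
lemma Cm_imp_continuous:
  assumes "0 < m" "Cm m f"
  shows "continuous_on UNIV f"
proof -
  have "f differentiable (at x)" for x
    using assms unfolding Cm_def by (metis nth_vderiv.simps(1))
  then show ?thesis
    by (simp add: continuous_on_eq_continuous_at differentiable_imp_continuous_within)
qed

section \<open>The operator P on radial functions\<close>

text \<open>The first-order terms of P combine through this identity.\<close>
lemma diff_cnj_products: "lam * cnj z - cnj lam * z = 2 * \<i> * of_real (Im (lam * cnj z))"
  by (simp add: complex_eq_iff)

lemma Pop_radial:
  assumes S: "open S" "r \<in> S" and du: "\<forall>s\<in>S. u differentiable (at s)"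
    and ddu: "deriv u differentiable (at r)"
  shows "Pop lam \<beta> (\<lambda>r t. complex_of_real (u r)) r t =
     of_real (r * (deriv u r + r * deriv (deriv u) r) - 2 * r * deriv u r * Im (lam * cnj (\<beta> t)))"
proof -
  define w where "w = (\<lambda>(r::real) (t::real). complex_of_real (u r))"
  have dT_w: "dT w s t' = 0" for s t' by (simp add: dT_def w_def)
  have dR_w: "dR w s t' = of_real (deriv u s)" if "s \<in> S" for s t'
  proof -
    have "(u has_real_derivative deriv u s) (at s)"
      using du that DERIV_deriv_iff_real_differentiable by blast
    then have "((\<lambda>s. complex_of_real (u s)) has_vector_derivative of_real (deriv u s)) (at s)"
      by (rule has_vector_derivative_of_real)
    then show ?thesis unfolding dR_def w_def by (simp add: vector_derivative_at)
  qed
  have Lbar_w: "Lbarop lam w s t' = \<i> * of_real s * of_real (deriv u s)" if "s \<in> S" for s t'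
    using dR_w[OF that] by (simp add: Lbarop_def dT_w)
  have dT_Lbar_w: "dT (Lbarop lam w) r t = 0"
    by (simp add: dT_def Lbarop_def dR_def w_def)
  have d2: "(deriv u has_real_derivative deriv (deriv u) r) (at r)"
    using ddu DERIV_deriv_iff_real_differentiable by blast
  have "((\<lambda>s. \<i> * of_real s * complex_of_real (deriv u s)) has_vector_derivative
      \<i> * (of_real (deriv u r) + of_real r * of_real (deriv (deriv u) r))) (at r)"
    by (auto intro!: derivative_eq_intros d2 simp: algebra_simps)
  then have "((\<lambda>s. Lbarop lam w s t) has_vector_derivative
      \<i> * (of_real (deriv u r) + of_real r * of_real (deriv (deriv u) r))) (at r)"
    by (rule has_vector_derivative_transform_within_open[OF _ S]) (simp add: Lbar_w)
  then have dR_Lbar_w: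
    "dR (Lbarop lam w) r t = \<i> * (of_real (deriv u r) + of_real r * of_real (deriv (deriv u) r))"
    by (simp add: dR_def vector_derivative_at)
  have "Pop lam \<beta> w r t = of_real r * (of_real (deriv u r) + of_real r * of_real (deriv (deriv u) r))
      + \<i> * of_real r * of_real (deriv u r) * (lam * cnj (\<beta> t) - cnj lam * \<beta> t)"
    unfolding Pop_def Lop_def dT_Lbar_w dR_Lbar_w
    by (simp add: dT_w Lbar_w[OF S(2)] dR_w[OF S(2)] algebra_simps)
  also have "\<dots> = of_real (r * (deriv u r + r * deriv (deriv u) r)
                           - 2 * r * deriv u r * Im (lam * cnj (\<beta> t)))"
    unfolding diff_cnj_products by (simp add: algebra_simps)
  finally show ?thesis unfolding w_def .
qed

lemma radial_sol_equation:
  assumes rs: "radial_sol lam \<beta> R u" and s: "s \<in> {0<..<R}"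
  shows "deriv u s + s * deriv (deriv u) s = 2 * Im (lam * cnj (\<beta> t)) * deriv u s"
proof -
  have du: "\<forall>s\<in>{0<..<R}. u differentiable (at s)"
    and ddu: "deriv u differentiable (at s)"
    and P0: "Pop lam \<beta> (\<lambda>r t. complex_of_real (u r)) s t = 0"
    using rs s unfolding radial_sol_def by auto
  have "of_real (s * (deriv u s + s * deriv (deriv u) s)
                 - 2 * s * deriv u s * Im (lam * cnj (\<beta> t))) = (0::complex)"
    using Pop_radial[OF _ s du ddu, of lam \<beta> t] P0 by simp
  then have "s * ((deriv u s + s * deriv (deriv u) s) - 2 * Im (lam * cnj (\<beta> t)) * deriv u s) = 0"
    unfolding of_real_eq_0_iff by (simp add: algebra_simps)
  then show ?thesis using s by simp
qed

lemma radial_nonconstant_imp_const_Im: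
  assumes rs: "radial_sol lam \<beta> R u" and nc: "\<not> (\<exists>C. \<forall>r\<in>{0<..<R}. u r = C)"
  shows "\<exists>\<sigma>. \<forall>t. 2 * Im (lam * cnj (\<beta> t)) = \<sigma>"
proof -
  have R: "R > 0" and du: "\<forall>s\<in>{0<..<R}. u differentiable (at s)"
    using rs unfolding radial_sol_def by auto
  have "\<exists>s\<in>{0<..<R}. deriv u s \<noteq> 0"
  proof (rule ccontr)
    assume "\<not> (\<exists>s\<in>{0<..<R}. deriv u s \<noteq> 0)"
    then have "(u has_vector_derivative 0) (at s)" if "s \<in> {0<..<R}" for s
      using du that by (simp add: DERIV_deriv_iff_real_differentiable[symmetric]
          has_real_derivative_iff_has_vector_derivative[symmetric])
    then have "u r = u (R/2)" if "r \<in> {0<..<R}" for r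
      by (intro zero_derivative_imp_equal[OF _ _ that]) (use R in auto)
    then show False using nc by blast
  qed
  then obtain s where s: "s \<in> {0<..<R}" and ds: "deriv u s \<noteq> 0" by blast
  have "2 * Im (lam * cnj (\<beta> t)) = (deriv u s + s * deriv (deriv u) s) / deriv u s" for t
    using radial_sol_equation[OF rs s, of t] ds by simp
  then show ?thesis by blast
qed

section \<open>The Euler equation (1 - sigma) u' + r u'' = 0\<close>

definition euler_sol :: "real \<Rightarrow> real \<Rightarrow> real \<Rightarrow> real \<Rightarrow> real" where
  "euler_sol \<sigma> C1 C2 r = (if \<sigma> = 0 then C1 * ln r + C2 else C1 * r powr \<sigma> + C2)"

definition euler_sol_d1 :: "real \<Rightarrow> real \<Rightarrow> real \<Rightarrow> real" where
  "euler_sol_d1 \<sigma> C1 r = (if \<sigma> = 0 then C1 / r else C1 * \<sigma> * r powr (\<sigma> - 1))"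

definition euler_sol_d2 :: "real \<Rightarrow> real \<Rightarrow> real \<Rightarrow> real" where
  "euler_sol_d2 \<sigma> C1 r = (if \<sigma> = 0 then - C1 / r^2 else C1 * \<sigma> * (\<sigma> - 1) * r powr (\<sigma> - 2))"

lemma euler_sol_has_derivative:
  assumes r: "r > 0"
  shows "(euler_sol \<sigma> C1 C2 has_real_derivative euler_sol_d1 \<sigma> C1 r) (at r)"
proof (cases "\<sigma> = 0")
  case True
  have "((\<lambda>r. C1 * ln r + C2) has_real_derivative C1 * (1/r)) (at r)"
    using r by (intro derivative_eq_intros DERIV_ln_divide) auto
  then show ?thesis using True by (simp add: euler_sol_def[abs_def] euler_sol_d1_def)
next
  case False
  have "((\<lambda>r. C1 * r powr \<sigma> + C2) has_real_derivative C1 * (\<sigma> * r powr (\<sigma> - 1)) + 0) (at r)"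
    using r by (intro DERIV_add DERIV_cmult has_real_derivative_powr DERIV_const)
  then show ?thesis using False by (simp add: euler_sol_def[abs_def] euler_sol_d1_def mult.assoc)
qed

lemma euler_sol_d1_has_derivative:
  assumes r: "r > 0"
  shows "(euler_sol_d1 \<sigma> C1 has_real_derivative euler_sol_d2 \<sigma> C1 r) (at r)"
proof (cases "\<sigma> = 0")
  case True
  have "((\<lambda>r. C1 * inverse r) has_real_derivative C1 * (- (inverse r ^ Suc (Suc 0)))) (at r)"
    using r by (intro DERIV_cmult DERIV_inverse) simp
  then show ?thesis
    using True by (simp add: euler_sol_d1_def[abs_def] euler_sol_d2_def divide_inverse power2_eq_square)
next
  case False
  have "((\<lambda>r. C1 * \<sigma> * r powr (\<sigma> - 1)) has_real_derivative
          C1 * \<sigma> * ((\<sigma> - 1) * r powr (\<sigma> - 1 - 1))) (at r)"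
    using r by (intro DERIV_cmult has_real_derivative_powr)
  then show ?thesis
    using False by (simp add: euler_sol_d1_def[abs_def] euler_sol_d2_def mult.assoc)
qed

lemma euler_sol_ode:
  assumes r: "r > 0"
  shows "(1 - \<sigma>) * euler_sol_d1 \<sigma> C1 r + r * euler_sol_d2 \<sigma> C1 r = 0"
proof (cases "\<sigma> = 0")
  case True
  then show ?thesis using r by (simp add: euler_sol_d1_def euler_sol_d2_def power2_eq_square)
next
  case False
  have "r * r powr (\<sigma> - 2) = r powr (\<sigma> - 1)"
    using powr_mult_base[of r "\<sigma> - 2"] r by simp
  then have "r * euler_sol_d2 \<sigma> C1 r = C1 * \<sigma> * (\<sigma> - 1) * r powr (\<sigma> - 1)"
    using False by (simp add: euler_sol_d2_def algebra_simps)
  then show ?thesis using False by (simp add: euler_sol_d1_def algebra_simps)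
qed

text \<open>r u'(r) for an Euler solution: the radial part of its L-potential.\<close>
lemma r_euler_sol_d1:
  assumes r: "r > 0"
  shows "r * euler_sol_d1 \<sigma> C1 r = (if \<sigma> = 0 then C1 else C1 * \<sigma> * r powr \<sigma>)"
  using r powr_mult_base[of r "\<sigma> - 1"] by (simp add: euler_sol_d1_def algebra_simps)

lemma euler_sol_integer_exponent:
  assumes "a > 0"
  shows "euler_sol (2 * a * of_int k1) C1 C2 r =
           (if k1 = 0 then C1 * ln r + C2 else C1 * r powr (2 * a * of_int k1) + C2)"
  using assms by (simp add: euler_sol_def)

lemma euler_sol_on_interval:
  assumes u: "\<forall>r\<in>{0<..<R}. u r = euler_sol \<sigma> C1 C2 r" and r: "r \<in> {0<..<R}"
  shows "(u has_real_derivative euler_sol_d1 \<sigma> C1 r) (at r)"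
    and "deriv u r = euler_sol_d1 \<sigma> C1 r"
    and "(deriv u has_real_derivative euler_sol_d2 \<sigma> C1 r) (at r)"
proof -
  have du: "(u has_real_derivative euler_sol_d1 \<sigma> C1 s) (at s)" if s: "s \<in> {0<..<R}" for s
    by (rule has_field_derivative_transform_within_open[where S="{0<..<R}"])
       (use s u euler_sol_has_derivative in auto)
  then show "(u has_real_derivative euler_sol_d1 \<sigma> C1 r) (at r)" using r .
  have dd: "deriv u s = euler_sol_d1 \<sigma> C1 s" if "s \<in> {0<..<R}" for s
    using du[OF that] by (rule DERIV_imp_deriv)
  then show "deriv u r = euler_sol_d1 \<sigma> C1 r" using r .
  show "(deriv u has_real_derivative euler_sol_d2 \<sigma> C1 r) (at r)"
    by (rule has_field_derivative_transform_within_open[where S="{0<..<R}"])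
       (use r dd euler_sol_d1_has_derivative in auto)
qed

lemma euler_first_integral:
  assumes R: "R > 0"
    and du': "\<And>s. s \<in> {0<..<R} \<Longrightarrow> (u' has_real_derivative u'' s) (at s)"
    and ode: "\<And>s. s \<in> {0<..<R} \<Longrightarrow> (1 - \<sigma>) * u' s + s * u'' s = 0"
  shows "\<exists>K. \<forall>s\<in>{0<..<R}. u' s = K * s powr (\<sigma> - 1)"
proof -
  define g where "g s = s powr (1 - \<sigma>) * u' s" for s
  have g': "(g has_vector_derivative 0) (at s)" if s: "s \<in> {0<..<R}" for s
  proof -
    have s0: "s > 0" using s by simp
    have "(g has_real_derivative
             (1 - \<sigma>) * s powr (1 - \<sigma> - 1) * u' s + s powr (1 - \<sigma>) * u'' s) (at s)"
      unfolding g_def[abs_def]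
      by (rule DERIV_cong[OF DERIV_mult[OF has_real_derivative_powr[OF s0] du'[OF s]]])
         (simp add: algebra_simps)
    also have "s powr (1 - \<sigma>) = s * s powr (1 - \<sigma> - 1)"
      using powr_mult_base[of s "1 - \<sigma> - 1"] s0 by simp
    also have "(1 - \<sigma>) * s powr (1 - \<sigma> - 1) * u' s + s * s powr (1 - \<sigma> - 1) * u'' s
             = s powr (1 - \<sigma> - 1) * ((1 - \<sigma>) * u' s + s * u'' s)"
      by (simp add: algebra_simps)
    finally show ?thesis
      using ode[OF s] by (simp add: has_real_derivative_iff_has_vector_derivative)
  qed
  have "u' s = g (R/2) * s powr (\<sigma> - 1)" if s: "s \<in> {0<..<R}" for s
  proof -
    have "u' s = (s powr (\<sigma> - 1) * s powr (1 - \<sigma>)) * u' s"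
      using s by (simp add: powr_add[symmetric])
    also have "\<dots> = g s * s powr (\<sigma> - 1)" by (simp add: g_def)
    also have "g s = g (R/2)"
      by (rule zero_derivative_imp_equal[OF _ g' s]) (use R in auto)
    finally show ?thesis .
  qed
  then show ?thesis by blast
qed

lemma euler_antiderivative:
  assumes R: "R > 0"
    and du: "\<And>s. s \<in> {0<..<R} \<Longrightarrow> (u has_real_derivative K * s powr (\<sigma> - 1)) (at s)"
  shows "\<exists>C1 C2. \<forall>r\<in>{0<..<R}. u r = euler_sol \<sigma> C1 C2 r"
proof -
  define C1 where "C1 = (if \<sigma> = 0 then K else K / \<sigma>)"
  define h where "h s = u s - euler_sol \<sigma> C1 0 s" for s
  have h': "(h has_vector_derivative 0) (at s)" if s: "s \<in> {0<..<R}" for s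
  proof -
    have "(h has_real_derivative K * s powr (\<sigma> - 1) - euler_sol_d1 \<sigma> C1 s) (at s)"
      unfolding h_def[abs_def] using s by (intro DERIV_diff du euler_sol_has_derivative) auto
    moreover have "euler_sol_d1 \<sigma> C1 s = K * s powr (\<sigma> - 1)"
      using s by (simp add: euler_sol_d1_def C1_def powr_minus divide_inverse)
    ultimately show ?thesis by (simp add: has_real_derivative_iff_has_vector_derivative)
  qed
  have "u r = euler_sol \<sigma> C1 (h (R/2)) r" if r: "r \<in> {0<..<R}" for r
  proof -
    have "h r = h (R/2)" by (rule zero_derivative_imp_equal[OF _ h' r]) (use R in auto)
    then show ?thesis unfolding h_def euler_sol_def by (auto simp: algebra_simps)
  qed
  then show ?thesis by blast
qed

lemma euler_sol_of_radial_sol: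
  assumes Im: "\<forall>t. 2 * Im (lam * cnj (\<beta> t)) = \<sigma>" and rs: "radial_sol lam \<beta> R u"
  shows "\<exists>C1 C2. \<forall>r\<in>{0<..<R}. u r = euler_sol \<sigma> C1 C2 r"
proof -
  have R: "R > 0"
    and du: "\<And>s. s \<in> {0<..<R} \<Longrightarrow> (u has_real_derivative deriv u s) (at s)"
    and ddu: "\<And>s. s \<in> {0<..<R} \<Longrightarrow> (deriv u has_real_derivative deriv (deriv u) s) (at s)"
    using rs unfolding radial_sol_def by (auto simp: DERIV_deriv_iff_real_differentiable)
  have "(1 - \<sigma>) * deriv u s + s * deriv (deriv u) s = 0" if "s \<in> {0<..<R}" for s
    using radial_sol_equation[OF rs that, of 0] unfolding Im[rule_format] by (simp add: algebra_simps)
  then obtain K where K: "\<forall>s\<in>{0<..<R}. deriv u s = K * s powr (\<sigma> - 1)"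
    using euler_first_integral[OF R ddu] by blast
  show ?thesis by (rule euler_antiderivative[OF R]) (use du K in auto)
qed

lemma radial_sol_of_euler_sol:
  assumes R: "R > 0" and Im: "\<forall>t. 2 * Im (lam * cnj (\<beta> t)) = \<sigma>"
    and u: "\<forall>r\<in>{0<..<R}. u r = euler_sol \<sigma> C1 C2 r"
  shows "radial_sol lam \<beta> R u"
  unfolding radial_sol_def
proof (intro conjI ballI allI)
  show "0 < R" by fact
  fix r t assume r: "r \<in> {0<..<R}"
  note u_derivs = euler_sol_on_interval[OF u r]
  show "u differentiable (at r)" "deriv u differentiable (at r)"
    using u_derivs(1,3) real_differentiable_def by blast+
  have du: "\<forall>s\<in>{0<..<R}. u differentiable (at s)"
    using euler_sol_on_interval(1)[OF u] real_differentiable_def by blast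
  have "Pop lam \<beta> (\<lambda>r t. complex_of_real (u r)) r t =
     of_real (r * (deriv u r + r * deriv (deriv u) r) - 2 * r * deriv u r * Im (lam * cnj (\<beta> t)))"
    by (rule Pop_radial[OF _ r du]) (use u_derivs(3) real_differentiable_def in auto)
  also have "r * (deriv u r + r * deriv (deriv u) r) - 2 * r * deriv u r * Im (lam * cnj (\<beta> t))
             = r * ((1 - \<sigma>) * euler_sol_d1 \<sigma> C1 r + r * euler_sol_d2 \<sigma> C1 r)"
  proof -
    have half: "Im (lam * cnj (\<beta> t)) = \<sigma> / 2" using Im[rule_format, of t] by linarith
    show ?thesis
      unfolding u_derivs(2) DERIV_imp_deriv[OF u_derivs(3)] half by (simp add: algebra_simps)
  qed
  also have "\<dots> = 0" using r euler_sol_ode by simp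
  finally show "Pop lam \<beta> (\<lambda>r t. complex_of_real (u r)) r t = 0" by simp
qed

lemma euler_sol_nonconstant: "\<not> (\<exists>C. \<forall>r\<in>{0<..<1}. euler_sol \<sigma> 1 0 r = C)"
proof
  assume "\<exists>C. \<forall>r\<in>{0<..<1}. euler_sol \<sigma> 1 0 r = C"
  then have eq: "euler_sol \<sigma> 1 0 (1/2) = euler_sol \<sigma> 1 0 (1/4)" by force
  show False
  proof (cases "\<sigma> = 0")
    case True then show False using eq by (simp add: euler_sol_def)
  next
    case False
    then have "ln ((1/2::real) powr \<sigma>) = ln ((1/4) powr \<sigma>)" using eq by (simp add: euler_sol_def)
    then have "\<sigma> * ln (1/2::real) = \<sigma> * ln (1/4)" by (simp only: ln_powr)
    then show False using False by simp
  qed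
qed

lemma nonconstant_radial_sol_exists:
  assumes "\<forall>t. 2 * Im (lam * cnj (\<beta> t)) = \<sigma>"
  shows "\<exists>R u. radial_sol lam \<beta> R u \<and> \<not> (\<exists>C. \<forall>r\<in>{0<..<R}. u r = C)"
proof -
  have "radial_sol lam \<beta> 1 (euler_sol \<sigma> 1 0)"
    by (rule radial_sol_of_euler_sol[OF _ assms]) auto
  then show ?thesis using euler_sol_nonconstant by blast
qed

section \<open>The structure of beta\<close>

lemma beta_form_parts:
  assumes lam: "lam = Complex a b" and a: "a > 0"
    and bet: "\<beta> t = lam / of_real a * of_real (p t) - \<i> * of_int k1"
  shows "Re (\<beta> t) = p t" and "2 * Im (lam * cnj (\<beta> t)) = 2 * a * of_int k1"
proof -
  have bt: "\<beta> t = Complex (p t) (b * p t / a - of_int k1)"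
    using bet a lam by (simp add: complex_eq_iff)
  show "Re (\<beta> t) = p t" by (simp add: bt)
  show "2 * Im (lam * cnj (\<beta> t)) = 2 * a * of_int k1"
    using a by (simp add: bt lam field_simps)
qed

lemma beta_form_continuous:
  assumes lam: "lam = Complex a b" and a: "a > 0"
    and bet: "\<forall>t. \<beta> t = lam / of_real a * of_real (p t) - \<i> * of_int k1"
    and cb: "continuous_on UNIV \<beta>"
  shows "continuous_on UNIV p"
proof -
  have "Re (\<beta> t) = p t" for t by (rule beta_form_parts(1)[OF lam a]) (use bet in blast)
  then show ?thesis using continuous_on_Re[OF cb] by simp
qed

lemma complex_of_real_has_vector_derivative: "(complex_of_real has_vector_derivative 1) (at t)"
  using has_vector_derivative_of_real[OF DERIV_ident[where F="at t"]] by (simp add: o_def)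

lemma Bexp_beta_form:
  assumes lam: "lam = Complex a b" and a: "a > 0"
    and bet: "\<forall>t. \<beta> t = lam / of_real a * of_real (p t) - \<i> * of_int k1"
    and cb: "continuous_on UNIV \<beta>"
  shows "Bexp \<beta> t = exp (\<i> * of_int k1 * of_real t) * exp (cnj lam / of_real a * of_real (oint 0 t p))"
proof -
  define F where "F t = cnj lam / of_real a * of_real (oint 0 t p) + \<i> * of_int k1 * of_real t" for t
  have cp: "continuous_on UNIV p" by (rule beta_form_continuous[OF lam a bet cb])
  have "(F has_vector_derivative cnj (\<beta> t)) (at t)" for t
  proof -
    have "(F has_vector_derivative cnj lam / of_real a * of_real (p t) + \<i> * of_int k1 * 1) (at t)"
      unfolding F_def[abs_def]
      by (intro derivative_intros has_vector_derivative_of_real oint_has_real_derivative cp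
          complex_of_real_has_vector_derivative)
    moreover have "cnj lam / of_real a * of_real (p t) + \<i> * of_int k1 * 1 = cnj (\<beta> t)"
      using a bet by (simp add: lam complex_eq_iff)
    ultimately show ?thesis by simp
  qed
  then have "oint 0 t (\<lambda>s. cnj (\<beta> s)) = F t - F 0"
    by (intro oint_eq_antiderivative continuous_on_cnj cb)
  then show ?thesis by (simp add: Bexp_def F_def exp_add mult.commute)
qed

text \<open>Conversely, if 2 Im (lam cnj beta) is constant, the integrality of the mean of beta
  forces beta = lam/a p - i k1 with p periodic of mean zero and k1 an integer.\<close>
lemma beta_form_of_const_Im:
  assumes lam: "lam = Complex a b" and a: "a > 0" and cb: "continuous_on UNIV \<beta>"
    and bper: "\<forall>t. \<beta> (t + 2*pi) = \<beta> t"
    and bint: "integral {0..2*pi} \<beta> / (2 * pi * \<i>) \<in> \<int>"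
    and Im: "\<forall>t. 2 * Im (lam * cnj (\<beta> t)) = \<sigma>"
  shows "\<exists>k1::int. \<exists>p::real \<Rightarrow> real. (\<forall>t. p (t + 2*pi) = p t) \<and> integral {0..2*pi} p = 0
        \<and> (\<forall>t. \<beta> t = lam / of_real a * of_real (p t) - \<i> * of_int k1)"
proof -
  (* beta = A p + B with A = lam/a and B = - i sigma/(2a); integrating over a period,
     the real part of the mean gives Int p = 0 and the imaginary part quantises sigma. *)
  define p where "p t = Re (\<beta> t)" for t
  define A where "A = Complex 1 (b / a)"
  define B where "B = - \<i> * of_real (\<sigma> / (2 * a))"
  define I where "I = integral {0..2*pi} p"
  have bt: "\<beta> t = A * of_real (p t) + B" for t
  proof -
    have "2 * (b * Re (\<beta> t) - a * Im (\<beta> t)) = \<sigma>" using Im[rule_format, of t] by (simp add: lam)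
    then show ?thesis using a by (simp add: A_def B_def p_def complex_eq_iff field_simps)
  qed
  have cp: "continuous_on UNIV p" unfolding p_def[abs_def] by (intro continuous_on_Re cb)
  have "((\<lambda>t. A * of_real (oint 0 t p) + B * of_real t) has_vector_derivative \<beta> t) (at t)" for t
  proof -
    have "((\<lambda>t. A * of_real (oint 0 t p) + B * of_real t) has_vector_derivative
            A * of_real (p t) + B * 1) (at t)"
      by (intro derivative_intros has_vector_derivative_of_real oint_has_real_derivative cp
          complex_of_real_has_vector_derivative)
    then show ?thesis by (simp add: bt)
  qed
  from oint_eq_antiderivative[OF cb this, of "2*pi"]
  have mean: "integral {0..2*pi} \<beta> = A * of_real I + B * of_real (2*pi)"
    by (simp add: oint_def I_def)
  obtain n where "integral {0..2*pi} \<beta> / (2 * pi * \<i>) = of_int n"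
    using bint Ints_cases by blast
  then have "A * of_real I + B * of_real (2*pi) = of_int n * (2 * pi * \<i>)"
    unfolding mean by (simp add: divide_eq_eq)
  from arg_cong[OF this, of Re] arg_cong[OF this, of Im]
  have I0: "I = 0" and "b / a * I - \<sigma> / (2 * a) * (2*pi) = of_int n * (2*pi)"
    by (simp_all add: A_def B_def)
  then have "pi * (\<sigma> + 2 * a * of_int n) = 0" using a by (simp add: field_simps)
  then have \<sigma>: "\<sigma> = - 2 * a * of_int n" by simp
  show ?thesis
  proof (intro exI conjI allI)
    show "p (t + 2*pi) = p t" for t by (simp add: p_def bper)
    show "integral {0..2*pi} p = 0" using I0 by (simp add: I_def)
    show "\<beta> t = lam / of_real a * of_real (p t) - \<i> * of_int (- n)" for t
      using a \<sigma> by (simp add: bt A_def B_def lam complex_eq_iff field_simps)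
  qed
qed

section \<open>The L-potentials as basic solutions of script L\<close>

lemma Bexp_has_vector_derivative:
  assumes "continuous_on UNIV \<beta>"
  shows "(Bexp \<beta> has_vector_derivative cnj (\<beta> t) * Bexp \<beta> t) (at t)"
proof -
  have "((\<lambda>t. oint 0 t (\<lambda>s. cnj (\<beta> s))) has_vector_derivative cnj (\<beta> t)) (at t)"
    by (intro oint_has_vector_derivative continuous_on_cnj assms)
  from field_vector_diff_chain_at[OF this DERIV_exp]
  show ?thesis by (simp add: Bexp_def[abs_def] o_def)
qed

lemma Bexp_nonzero: "Bexp \<beta> t \<noteq> 0"
  by (simp add: Bexp_def)

lemma Bexp_continuous:
  assumes "continuous_on UNIV \<beta>"
  shows "continuous_on UNIV (Bexp \<beta>)"
  using Bexp_has_vector_derivative[OF assms] differentiableI_vector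
    differentiable_imp_continuous_within
  by (metis continuous_on_eq_continuous_at open_UNIV)

lemma Bexp_periodic:
  assumes lam: "lam = Complex a b" and a: "a > 0"
    and bet: "\<forall>t. \<beta> t = lam / of_real a * of_real (p t) - \<i> * of_int k1"
    and per: "\<forall>t. p (t + 2*pi) = p t" and mean0: "integral {0..2*pi} p = 0"
    and cb: "continuous_on UNIV \<beta>"
  shows "Bexp \<beta> (t + 2*pi) = Bexp \<beta> t"
proof -
  have "exp (\<i> * of_int k1 * of_real (t + 2*pi))
        = exp (\<i> * of_int k1 * of_real t) * exp ((2 * of_int k1 * pi) * \<i>)"
    by (simp add: exp_add[symmetric] algebra_simps)
  also have "exp ((2 * of_int k1 * pi) * \<i>) = 1"
    by (rule exp_integer_2pi) simp
  finally show ?thesis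
    using Bexp_beta_form[OF lam a bet cb]
      oint_periodic[OF beta_form_continuous[OF lam a bet cb] per mean0] by simp
qed

text \<open>K B(t) has the continuous argument Arg K + k1 t - (b/a) Int_0^t p; since p has mean
  zero, this argument increases by 2 pi k1 over a period, so the winding number is k1.\<close>
lemma Bexp_winding:
  assumes lam: "lam = Complex a b" and a: "a > 0" and K: "K \<noteq> 0"
    and bet: "\<forall>t. \<beta> t = lam / of_real a * of_real (p t) - \<i> * of_int k1"
    and mean0: "integral {0..2*pi} p = 0" and cb: "continuous_on UNIV \<beta>"
  shows "has_winding (\<lambda>t. K * Bexp \<beta> t) k1"
  unfolding has_winding_def
proof (intro conjI allI exI)
  show "continuous_on UNIV (\<lambda>t. K * Bexp \<beta> t)"
    by (intro continuous_intros Bexp_continuous cb)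
  show "K * Bexp \<beta> t \<noteq> 0" for t using K Bexp_nonzero by simp
  define P where "P t = oint 0 t p" for t
  define \<theta> where "\<theta> t = Arg K + of_int k1 * t - b / a * P t" for t
  have "isCont P t" for t
    unfolding P_def using oint_has_real_derivative[OF beta_form_continuous[OF lam a bet cb]]
    by (rule DERIV_isCont)
  then show "continuous_on UNIV \<theta>"
    unfolding \<theta>_def[abs_def] by (intro continuous_intros) (simp add: continuous_on_eq_continuous_at)
  fix t
  have "cnj lam / of_real a * of_real (P t) = of_real (P t) + \<i> * of_real (- (b / a * P t))"
    using a by (simp add: lam complex_eq_iff)
  then have "exp (cnj lam / of_real a * of_real (P t))
             = of_real (exp (P t)) * exp (\<i> * of_real (- (b / a * P t)))"
    by (simp only: exp_add exp_of_real)
  then have "K * Bexp \<beta> t = of_real (cmod K) * exp (\<i> * of_real (Arg K))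
       * (exp (\<i> * of_int k1 * of_real t) * (of_real (exp (P t)) * exp (\<i> * of_real (- (b / a * P t)))))"
    using Bexp_beta_form[OF lam a bet cb] Arg_eq[OF K] P_def by metis
  also have "\<dots> = of_real (cmod K * exp (P t)) * exp (\<i> * of_real (\<theta> t))"
    by (simp add: \<theta>_def exp_add[symmetric] algebra_simps)
  finally have polar: "K * Bexp \<beta> t = of_real (cmod K * exp (P t)) * exp (\<i> * of_real (\<theta> t))" .
  then have "cmod (K * Bexp \<beta> t) = cmod K * exp (P t)"
    by (simp add: norm_mult)
  with polar show "K * Bexp \<beta> t = of_real (cmod (K * Bexp \<beta> t)) * exp (\<i> * of_real (\<theta> t))"
    by simp
  have "P (2*pi) = 0" using mean0 by (simp add: P_def oint_def)
  then show "\<theta> (2*pi) - \<theta> 0 = 2 * pi * of_int k1"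
    by (simp add: \<theta>_def P_def)
qed

text \<open>If 2 Im (lam cnj beta) = sigma and K is purely imaginary, w = K r powr sigma B(t)
  solves script L w = 0: the angular derivative contributes lam cnj beta w, the conjugate
  term cnj lam beta w, and their difference i sigma w cancels the radial term.\<close>
lemma Lcal_power_solution:
  assumes r: "r > 0" and w: "\<forall>s>0. \<forall>t. w s t = K * of_real (s powr \<sigma>) * Bexp \<beta> t"
    and cK: "cnj K = - K" and Im: "\<forall>t. 2 * Im (lam * cnj (\<beta> t)) = \<sigma>"
    and cb: "continuous_on UNIV \<beta>"
  shows "(\<lambda>s. w s t) differentiable (at r)" "(\<lambda>s. w r s) differentiable (at t)"
    "Lcal lam \<beta> w r t = 0"
proof -
  have "((\<lambda>s. K * of_real (s powr \<sigma>) * Bexp \<beta> t) has_vector_derivative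
        K * of_real (\<sigma> * r powr (\<sigma> - 1)) * Bexp \<beta> t) (at r)"
    by (intro has_vector_derivative_mult_left has_vector_derivative_mult_right
        has_vector_derivative_of_real has_real_derivative_powr r)
  then have hR: "((\<lambda>s. w s t) has_vector_derivative K * of_real (\<sigma> * r powr (\<sigma> - 1)) * Bexp \<beta> t) (at r)"
    by (rule has_vector_derivative_transform_within_open[where S="{0<..}"]) (use r w in auto)
  have "(\<lambda>s. w r s) = (\<lambda>s. K * of_real (r powr \<sigma>) * Bexp \<beta> s)" using w r by auto
  then have hT: "((\<lambda>s. w r s) has_vector_derivative K * of_real (r powr \<sigma>) * (cnj (\<beta> t) * Bexp \<beta> t)) (at t)"
    by (simp add: has_vector_derivative_mult_right Bexp_has_vector_derivative cb)
  show "(\<lambda>s. w s t) differentiable (at r)" using hR differentiableI_vector by blast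
  show "(\<lambda>s. w r s) differentiable (at t)" using hT differentiableI_vector by blast
  have rr: "of_real r * of_real (\<sigma> * r powr (\<sigma> - 1)) = (of_real (\<sigma> * r powr \<sigma>) :: complex)"
    using powr_mult_base[of r "\<sigma> - 1"] r by (simp flip: of_real_mult add: algebra_simps)
  have "cfun lam \<beta> t * cnj (w r t) = K * of_real (r powr \<sigma>) * Bexp \<beta> t * (cnj lam * \<beta> t)"
    using Bexp_nonzero[of \<beta> t] w r cK by (simp add: cfun_def field_simps)
  then have "Lcal lam \<beta> w r t = K * of_real (r powr \<sigma>) * Bexp \<beta> t * (lam * cnj (\<beta> t) - cnj lam * \<beta> t)
      - \<i> * K * Bexp \<beta> t * (of_real r * of_real (\<sigma> * r powr (\<sigma> - 1)))"
    unfolding Lcal_def Lop_def dR_def dT_def vector_derivative_at[OF hR] vector_derivative_at[OF hT]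
    by (simp add: algebra_simps)
  also have "\<dots> = 0"
  proof -
    have half: "Im (lam * cnj (\<beta> t)) = \<sigma> / 2" using Im[rule_format, of t] by linarith
    show ?thesis unfolding rr diff_cnj_products half by (simp add: algebra_simps)
  qed
  finally show "Lcal lam \<beta> w r t = 0" .
qed

text \<open>The L-potential of a radial solution: w = B(t) Lbar u = i r u'(r) B(t).\<close>
lemma Lpot_radial_sol:
  assumes a: "a > 0" and R: "R > 0"
    and u: "\<forall>r\<in>{0<..<R}. u r = (if k1 = 0 then C1 * ln r + C2 else C1 * r powr (2 * a * of_int k1) + C2)"
    and r: "r \<in> {0<..<R}"
  shows "Lpot lam \<beta> (\<lambda>r t. u r) r t =
       (if k1 = 0 then \<i> * of_real C1 * Bexp \<beta> t
        else 2 * \<i> * of_real a * of_int k1 * of_real C1 * of_real (r powr (2 * a * of_int k1)) * Bexp \<beta> t)"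
proof -
  define \<sigma> where "\<sigma> = 2 * a * of_int k1"
  have u': "\<forall>r\<in>{0<..<R}. u r = euler_sol \<sigma> C1 C2 r"
    using u euler_sol_integer_exponent[OF a] by (simp add: \<sigma>_def)
  have "dR (\<lambda>r t. complex_of_real (u r)) r t = of_real (euler_sol_d1 \<sigma> C1 r)"
    unfolding dR_def
    by (intro vector_derivative_at has_vector_derivative_of_real euler_sol_on_interval(1)[OF u' r])
  then have Lpot_eq: "Lpot lam \<beta> (\<lambda>r t. u r) r t = Bexp \<beta> t * (\<i> * of_real (r * euler_sol_d1 \<sigma> C1 r))"
    unfolding Lpot_def Lbarop_def by (simp add: dT_def)
  have "r * euler_sol_d1 \<sigma> C1 r = (if k1 = 0 then C1 else 2 * a * of_int k1 * C1 * r powr \<sigma>)"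
    using r a r_euler_sol_d1[of r \<sigma> C1] by (simp add: \<sigma>_def)
  then show ?thesis
    unfolding Lpot_eq by (cases "k1 = 0") (simp_all add: \<sigma>_def algebra_simps)
qed

lemma basic_solution_beta_form:
  assumes lam: "lam = Complex a b" and a: "a > 0"
    and bet: "\<forall>t. \<beta> t = lam / of_real a * of_real (p t) - \<i> * of_int k1"
    and per: "\<forall>t. p (t + 2*pi) = p t" and mean0: "integral {0..2*pi} p = 0"
    and cb: "continuous_on UNIV \<beta>" and C1: "C1 \<noteq> 0"
  shows "basic_solution lam \<beta>
           (\<lambda>r t. if k1 = 0 then \<i> * of_real C1 * Bexp \<beta> t
                  else 2 * \<i> * of_real a * of_int k1 * of_real C1 * of_real (r powr (2 * a * of_int k1)) * Bexp \<beta> t)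
           (of_real (2 * a * of_int k1)) k1"
proof -
  define w where "w = (\<lambda>r t. if k1 = 0 then \<i> * of_real C1 * Bexp \<beta> t
      else 2 * \<i> * of_real a * of_int k1 * of_real C1 * of_real (r powr (2 * a * of_int k1)) * Bexp \<beta> t)"
  define \<sigma> where "\<sigma> = 2 * a * of_int k1"
  define K where "K = (if k1 = 0 then \<i> * of_real C1 else 2 * \<i> * of_real a * of_int k1 * of_real C1)"
  have Bper: "Bexp \<beta> (t + 2*pi) = Bexp \<beta> t" for t
    by (rule Bexp_periodic[OF lam a bet per mean0 cb])
  have w_eq: "\<forall>s>0. \<forall>t. w s t = K * of_real (s powr \<sigma>) * Bexp \<beta> t"
    by (simp add: w_def K_def \<sigma>_def)
  have K: "K \<noteq> 0" "cnj K = - K" using C1 a by (simp_all add: K_def)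
  have "2 * Im (lam * cnj (\<beta> t)) = \<sigma>" for t
    unfolding \<sigma>_def by (rule beta_form_parts(2)[OF lam a, where p=p]) (use bet in blast)
  then have Im: "\<forall>t. 2 * Im (lam * cnj (\<beta> t)) = \<sigma>" by blast
  note solves = Lcal_power_solution[OF _ w_eq K(2) Im cb]
  have "Lcal_solution lam \<beta> w"
    unfolding Lcal_solution_def using solves by (simp add: w_def Bper)
  moreover have "\<exists>r>0. \<exists>t. w r t \<noteq> 0"
    using w_eq K Bexp_nonzero by (intro exI[of _ 1]) auto
  moreover have "\<exists>f. (\<forall>t. f (t + 2*pi) = f t) \<and> (\<forall>t. f t \<noteq> 0)
             \<and> (\<forall>r>0. \<forall>t. w r t = of_real r powr of_real \<sigma> * f t) \<and> has_winding f k1"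
  proof (intro exI conjI allI impI)
    show "K * Bexp \<beta> (t + 2*pi) = K * Bexp \<beta> t" for t by (simp add: Bper)
    show "K * Bexp \<beta> t \<noteq> 0" for t using K Bexp_nonzero by simp
    show "w r t = of_real r powr of_real \<sigma> * (K * Bexp \<beta> t)" if "r > 0" for r t
      using w_eq that by (simp add: powr_of_real)
    show "has_winding (\<lambda>t. K * Bexp \<beta> t) k1"
      by (rule Bexp_winding[OF lam a K(1) bet mean0 cb])
  qed
  ultimately have "basic_solution lam \<beta> w (of_real \<sigma>) k1"
    unfolding basic_solution_def by simp
  then show ?thesis unfolding w_def \<sigma>_def .
qed

lemma radial_sol_iff_beta_form:
  assumes lam: "lam = Complex a b" and a: "a > 0" and R: "R > 0"
    and bet: "\<forall>t. \<beta> t = lam / of_real a * of_real (p t) - \<i> * of_int k1"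
  shows "radial_sol lam \<beta> R u \<longleftrightarrow>
           (\<exists>C1 C2 :: real. \<forall>r\<in>{0<..<R}.
              u r = (if k1 = 0 then C1 * ln r + C2 else C1 * r powr (2 * a * of_int k1) + C2))"
proof -
  have Im: "\<forall>t. 2 * Im (lam * cnj (\<beta> t)) = 2 * a * of_int k1"
    using beta_form_parts(2)[OF lam a, where p=p] bet by blast
  show ?thesis
    unfolding euler_sol_integer_exponent[OF a, symmetric]
    using euler_sol_of_radial_sol[OF Im] radial_sol_of_euler_sol[OF R Im] by blast
qed

lemma nonconstant_radial_sol_iff_beta_form:
  assumes lam: "lam = Complex a b" and a: "a > 0" and cb: "continuous_on UNIV \<beta>"
    and bper: "\<forall>t. \<beta> (t + 2*pi) = \<beta> t"
    and bint: "integral {0..2*pi} \<beta> / (2 * pi * \<i>) \<in> \<int>"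
  shows "(\<exists>R u. radial_sol lam \<beta> R u \<and> \<not> (\<exists>C. \<forall>r\<in>{0<..<R}. u r = C))
      \<longleftrightarrow> (\<exists>k1::int. \<exists>p::real \<Rightarrow> real. (\<forall>t. p (t + 2*pi) = p t) \<and> integral {0..2*pi} p = 0
             \<and> (\<forall>t. \<beta> t = lam / of_real a * of_real (p t) - \<i> * of_int k1))"
proof
  assume "\<exists>R u. radial_sol lam \<beta> R u \<and> \<not> (\<exists>C. \<forall>r\<in>{0<..<R}. u r = C)"
  then obtain \<sigma> where "\<forall>t. 2 * Im (lam * cnj (\<beta> t)) = \<sigma>"
    using radial_nonconstant_imp_const_Im by blast
  then show "\<exists>k1 p. (\<forall>t. p (t + 2*pi) = p t) \<and> integral {0..2*pi} p = 0
           \<and> (\<forall>t. \<beta> t = lam / of_real a * of_real (p t) - \<i> * of_int k1)"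
    by (rule beta_form_of_const_Im[OF lam a cb bper bint])
next
  assume "\<exists>k1 p. (\<forall>t. p (t + 2*pi) = p t) \<and> integral {0..2*pi} p = 0
           \<and> (\<forall>t. \<beta> t = lam / of_real a * of_real (p t) - \<i> * of_int k1)"
  then obtain k1 p where "\<forall>t. \<beta> t = lam / of_real a * of_real (p t) - \<i> * of_int k1" by blast
  then have "\<forall>t. 2 * Im (lam * cnj (\<beta> t)) = 2 * a * of_int k1"
    using beta_form_parts(2)[OF lam a, where p=p] by blast
  then show "\<exists>R u. radial_sol lam \<beta> R u \<and> \<not> (\<exists>C. \<forall>r\<in>{0<..<R}. u r = C)"
    by (rule nonconstant_radial_sol_exists)
qed

theorem proposition10p1:
  fixes a b :: real and \<beta> :: "real \<Rightarrow> complex" and m :: nat and lam :: complex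
  assumes lam_def: "lam = Complex a b"
    and a_pos: "a > 0"
    and m_ge: "m \<ge> 2"
    and beta_Cm: "Cm m \<beta>"
    and beta_per: "\<forall>t. \<beta> (t + 2*pi) = \<beta> t"
    and beta_int: "integral {0..2*pi} \<beta> / (2 * pi * \<i>) \<in> \<int>"
  shows
   "((\<exists>R u. radial_sol lam \<beta> R u \<and> \<not> (\<exists>C. \<forall>r\<in>{0<..<R}. u r = C))
      \<longleftrightarrow>
     (\<exists>k1::int. \<exists>p::real \<Rightarrow> real. (\<forall>t. p (t + 2*pi) = p t) \<and> integral {0..2*pi} p = 0
        \<and> (\<forall>t. \<beta> t = lam / of_real a * of_real (p t) - \<i> * of_int k1)))
    \<and>
    (\<forall>(k1::int) (p::real \<Rightarrow> real).
       (\<forall>t. p (t + 2*pi) = p t) \<and> integral {0..2*pi} p = 0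
       \<and> (\<forall>t. \<beta> t = lam / of_real a * of_real (p t) - \<i> * of_int k1)
      \<longrightarrow>
       (\<forall>t. Bexp \<beta> t = exp (\<i> * of_int k1 * of_real t) * exp (cnj lam / of_real a * of_real (oint 0 t p)))
       \<and> (\<forall>R u. R > 0 \<longrightarrow>
            (radial_sol lam \<beta> R u \<longleftrightarrow>
               (\<exists>C1 C2 :: real. \<forall>r\<in>{0<..<R}.
                  u r = (if k1 = 0 then C1 * ln r + C2 else C1 * r powr (2 * a * of_int k1) + C2))))
       \<and> (\<forall>R u (C1::real) (C2::real). R > 0 \<and>
            (\<forall>r\<in>{0<..<R}. u r = (if k1 = 0 then C1 * ln r + C2 else C1 * r powr (2 * a * of_int k1) + C2))
            \<longrightarrow> (\<forall>r\<in>{0<..<R}. \<forall>t. Lpot lam \<beta> (\<lambda>r t. u r) r t =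
                   (if k1 = 0 then \<i> * of_real C1 * Bexp \<beta> t
                    else 2 * \<i> * of_real a * of_int k1 * of_real C1 * of_real (r powr (2 * a * of_int k1)) * Bexp \<beta> t)))
       \<and> (\<forall>C1::real. C1 \<noteq> 0 \<longrightarrow>
            basic_solution lam \<beta>
              (\<lambda>r t. if k1 = 0 then \<i> * of_real C1 * Bexp \<beta> t
                     else 2 * \<i> * of_real a * of_int k1 * of_real C1 * of_real (r powr (2 * a * of_int k1)) * Bexp \<beta> t)
              (of_real (2 * a * of_int k1)) k1))"
proof -
  have cb: "continuous_on UNIV \<beta>" by (rule Cm_imp_continuous[OF _ beta_Cm]) (use m_ge in simp)
  show ?thesis
    by (intro conjI allI impI ballI
          nonconstant_radial_sol_iff_beta_form[OF lam_def a_pos cb beta_per beta_int]; elim conjE)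
       (rule Bexp_beta_form[OF lam_def a_pos _ cb] radial_sol_iff_beta_form[OF lam_def a_pos]
          Lpot_radial_sol[OF a_pos] basic_solution_beta_form[OF lam_def a_pos _ _ _ cb]; assumption)+
qed

end
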